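(* Let $q\ge2$ and $\ell\ge3$ be integers, $n$ a positive integer, $P=\lceil \frac{\log_q n+\log_q\log_q n}{2}\rceil$, and $a\in[0,P-1]$. Then the code $$\mathcal{C}=\{\boldsymbol{x}\in\Sigma_q^n:\ \boldsymbol{x}\text{ is good},\ \mathrm{Inv}(\boldsymbol{x})\equiv a\pmod P\}$$ is an $\ell$-read $(n,3)_q$-code. Moreover, there exists $a\in[0,P-1]$ such that $r(\mathcal{C})\le \log_q P+o(1)=\log_q\log_q n-\log_q 2+o(1)$ as $n\to\infty$.
   Context: $\Sigma_q=\{0,\dots,q-1\}$, $[i,j]=\{i,\dots,j\}$. For $\boldsymbol{x}\in\Sigma_q^n$, $x[i]$ is its $i$-th entry, with $x[i]=0$ for $i\notin[1,n]$, and $\boldsymbol{x}[i,j]=(x[i],\dots,x[j])$. The $\ell$-read vector of $\boldsymbol{x}$ is the length-$(n+\ell-1)$ vector $\mathcal{R}_\ell(\boldsymbol{x})$ whose $i$-th entry is the multiset $\{\{x[i-\ell+1],\dots,x[i]\}\}$. A set $\mathcal{C}\subseteq\Sigma_q^n$ is an $\ell$-read $(n,d)_q$-code if $d_H(\mathcal{R}_\ell(\boldsymbol{x}),\mathcal{R}_\ell(\boldsymbol{y}))\ge d$ for all distinct $\boldsymbol{x},\boldsymbol{y}\in\mathcal{C}$ ($d_H$ = Hamming distance). Redundancy: $r(\mathcal{C})=n-\log_q|\mathcal{C}|$. $\mathrm{Inv}(\boldsymbol{x})=|\{(i,j):1\le i<j\le n,\ x[i]>x[j]\}|$. A sequence is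 alternating if it is of the form $abab\cdots$ (of any length) for two distinct symbols $a,b$. For $\ell\ge3$, $\boldsymbol{x}\in\Sigma_q^n$ is good if for every integer $t\ge\frac{\log_q n+\log_q\log_q n}{2}-1$ and every $i\in[1,n-t\ell-1]$, the sequence $(x[i],x[i+1],x[i+\ell],x[i+\ell+1],\dots,x[i+t\ell],x[i+t\ell+1])$ of length $2(t+1)$ is not alternating. *)

theory Defs
  imports Complex_Main "HOL-Library.Multiset"
begin

definition words :: "nat \<Rightarrow> nat \<Rightarrow> nat list set" where
  "words q n = {xs. length xs = n \<and> set xs \<subseteq> {..<q}}"

text \<open>1-based entry x[i], with x[i] = 0 for i outside [1,n].\<close>
definition entry :: "nat list \<Rightarrow> int \<Rightarrow> nat" where
  "entry xs i = (if 1 \<le> i \<and> i \<le> int (length xs) then xs ! (nat i - 1) else 0)"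

definition read_vec :: "nat \<Rightarrow> nat list \<Rightarrow> nat multiset list" where
  "read_vec l xs = map (\<lambda>i. mset (map (entry xs) [int i - int l + 1 .. int i]))
                       [1..<length xs + l]"

definition hamming :: "'a list \<Rightarrow> 'a list \<Rightarrow> nat" where
  "hamming u v = card {i. i < length u \<and> i < length v \<and> u ! i \<noteq> v ! i}"

definition is_read_code :: "nat \<Rightarrow> nat \<Rightarrow> nat \<Rightarrow> nat \<Rightarrow> nat list set \<Rightarrow> bool" where
  "is_read_code l q n d C \<longleftrightarrow> C \<subseteq> words q n \<and>
     (\<forall>x\<in>C. \<forall>y\<in>C. x \<noteq> y \<longrightarrow> hamming (read_vec l x) (read_vec l y) \<ge> d)"

definition redundancy :: "nat \<Rightarrow> nat \<Rightarrow> nat list set \<Rightarrow> real" where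
  "redundancy q n C = real n - log q (real (card C))"

definition Inv :: "nat list \<Rightarrow> nat" where
  "Inv xs = card {(i, j). i < j \<and> j < length xs \<and> xs ! i > xs ! j}"

definition alternating :: "nat list \<Rightarrow> bool" where
  "alternating ys \<longleftrightarrow> (\<exists>a b. a \<noteq> b \<and> (\<forall>k<length ys. ys ! k = (if even k then a else b)))"

definition good :: "nat \<Rightarrow> nat \<Rightarrow> nat list \<Rightarrow> bool" where
  "good q l xs \<longleftrightarrow>
     (\<forall>t::nat. real t \<ge> (log q (length xs) + log q (log q (length xs))) / 2 - 1 \<longrightarrow>
       (\<forall>i::int. 1 \<le> i \<and> i \<le> int (length xs) - int t * int l - 1 \<longrightarrow>
         \<not> alternating (concat (map (\<lambda>s. [entry xs (i + int s * int l), entry xs (i + int s * int l + 1)])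
                                      [0..<t + 1]))))"

definition Pval :: "nat \<Rightarrow> nat \<Rightarrow> int" where
  "Pval q n = \<lceil>(log q n + log q (log q n)) / 2\<rceil>"

definition code_C :: "nat \<Rightarrow> nat \<Rightarrow> nat \<Rightarrow> int \<Rightarrow> nat list set" where
  "code_C q l n a = {xs \<in> words q n. good q l xs \<and> int (Inv xs) mod Pval q n = a mod Pval q n}"

end

theory Submission
  imports Defs "HOL-Library.FuncSet"
begin

text \<open>
  If two distinct words x, y of the same length have l-read vectors at Hamming distance at most 2,
  only the first and the last window containing a mismatch differ. Two consecutive equal windows
  force the mismatch of x and y at position i to repeat the one at position i - l; for l \<ge> 3 this
  means that y arises from x by swapping adjacent pairs (a, b) at positions k, k + l, ..., k + t l.
  These pairs form an alternating sequence of length 2 (t + 1) in x, so t + 1 < P when x is good,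
  whereas Inv x and Inv y differ by exactly t + 1 and are congruent modulo P.

  For fixed t and i at most q^(n - 2t) words carry such a pattern, so summing the geometric series
  from the goodness threshold on, at most 2 q^2 q^n / log_q n words are not good. By pigeonhole
  over the P residues of Inv some code has at least q^n (1 - o(1)) / P words, and
  P = (log_q n + log_q log_q n) / 2 + O(1).
\<close>

section \<open>Read windows\<close>

definition window :: "nat \<Rightarrow> (int \<Rightarrow> 'a) \<Rightarrow> int \<Rightarrow> 'a multiset" where
  "window l f i = mset (map f [i - int l + 1 .. i])"

lemma entry_eq_0: "i < 1 \<or> int (length xs) < i \<Longrightarrow> entry xs i = 0"
  unfolding entry_def by auto

lemma entry_Suc: "j < length xs \<Longrightarrow> entry xs (int j + 1) = xs ! j"
  unfolding entry_def by (simp add: nat_add_distrib)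

lemma window_last:
  "l \<ge> 1 \<Longrightarrow> window l f i = add_mset (f i) (mset (map f [i - int l + 1 .. i - 1]))"
  unfolding window_def by (subst upto_rec2) auto

lemma window_first:
  "l \<ge> 1 \<Longrightarrow> window l f i = add_mset (f (i - int l + 1)) (mset (map f [i - int l + 2 .. i]))"
  unfolding window_def by (subst upto_rec1) (auto simp: algebra_simps)

lemma window_last_two:
  "l \<ge> 2 \<Longrightarrow>
   window l f i = add_mset (f i) (add_mset (f (i - 1)) (mset (map f [i - int l + 1 .. i - 2])))"
  by (subst window_last) (auto simp: upto_rec2)

lemma length_read_vec: "length (read_vec l x) = length x + l - 1"
  unfolding read_vec_def by simp

lemma nth_read_vec: "j < length x + l - 1 \<Longrightarrow> read_vec l x ! j = window l (entry x) (int j + 1)"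
  unfolding read_vec_def window_def by (simp add: algebra_simps)

lemma windows_differ_subset:
  assumes "length x = length y"
  shows "{i. window l (entry x) i \<noteq> window l (entry y) i} \<subseteq> {1 .. int (length x) + int l - 1}"
proof
  fix i assume "i \<in> {i. window l (entry x) i \<noteq> window l (entry y) i}"
  moreover have "window l (entry x) i = window l (entry y) i" if "i < 1 \<or> int (length x) + int l \<le> i"
    using that assms unfolding window_def by (intro arg_cong[where f = mset] map_cong) (auto simp: entry_eq_0)
  ultimately show "i \<in> {1 .. int (length x) + int l - 1}" by force
qed

lemma hamming_read_vec:
  assumes "length x = length y"
  shows "hamming (read_vec l x) (read_vec l y) = card {i. window l (entry x) i \<noteq> window l (entry y) i}"
proof -
  have "{i. window l (entry x) i \<noteq> window l (entry y) i} =
        (\<lambda>j. int j + 1) ` {j. j < length x + l - 1 \<and> read_vec l x ! j \<noteq> read_vec l y ! j}"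
    using windows_differ_subset[OF assms, of l] assms
    by (force simp: nth_read_vec image_iff intro: exI[of _ "nat (_ - 1)"])
  then show ?thesis
    unfolding hamming_def using assms by (simp add: length_read_vec card_image inj_on_def)
qed

lemma windows_agree_except_ends:
  assumes len: "length x = length y" and dist: "hamming (read_vec l x) (read_vec l y) < 3" and l: "l \<ge> 2"
    and below_k: "\<And>j. j < k \<Longrightarrow> entry x j = entry y j" and at_k: "entry x k \<noteq> entry y k"
    and above_m: "\<And>j. m < j \<Longrightarrow> entry x j = entry y j" and at_m: "entry x m \<noteq> entry y m"
    and i: "i \<noteq> k" "i \<noteq> m + int l - 1"
  shows "window l (entry x) i = window l (entry y) i"
proof (rule ccontr)
  have "l \<ge> 1" using l by simp
  define W where "W = {i. window l (entry x) i \<noteq> window l (entry y) i}"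
  assume "window l (entry x) i \<noteq> window l (entry y) i"
  moreover have "window l (entry x) k \<noteq> window l (entry y) k"
  proof -
    have common: "map (entry x) [k - int l + 1 .. k - 1] = map (entry y) [k - int l + 1 .. k - 1]"
      by (intro map_cong) (auto intro: below_k)
    show ?thesis using at_k l unfolding window_last[OF \<open>l \<ge> 1\<close>] common by simp
  qed
  moreover have "window l (entry x) (m + int l - 1) \<noteq> window l (entry y) (m + int l - 1)"
  proof -
    have first: "window l h (m + int l - 1) = add_mset (h m) (mset (map h [m + 1 .. m + int l - 1]))"
      for h :: "int \<Rightarrow> nat"
      using window_first[OF \<open>l \<ge> 1\<close>, of h "m + int l - 1"] by (simp add: algebra_simps)
    have common: "map (entry x) [m + 1 .. m + int l - 1] = map (entry y) [m + 1 .. m + int l - 1]"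
      by (intro map_cong) (auto intro: above_m)
    show ?thesis using at_m unfolding first common by simp
  qed
  ultimately have "{k, m + int l - 1, i} \<subseteq> W" unfolding W_def by blast
  moreover have "k \<noteq> m + int l - 1"
    using at_k above_m l by force
  moreover have "finite W"
    unfolding W_def by (rule finite_subset[OF windows_differ_subset[OF len]]) simp
  ultimately have "3 \<le> card W"
    using i by (metis card_mono card_3_iff)
  then show False using dist hamming_read_vec[OF len] unfolding W_def by simp
qed

section \<open>Propagation of mismatches through equal windows\<close>

definition mismatch :: "('a \<Rightarrow> 'b) \<Rightarrow> ('a \<Rightarrow> 'b) \<Rightarrow> 'a \<Rightarrow> ('b \<times> 'b) option" where
  "mismatch f g j = (if f j = g j then None else Some (f j, g j))"

lemma mismatch_eq_None_iff [simp]: "mismatch f g j = None \<longleftrightarrow> f j = g j"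
  unfolding mismatch_def by simp

lemma mismatch_eq_Some_iff [simp]: "mismatch f g j = Some (a, b) \<longleftrightarrow> f j \<noteq> g j \<and> f j = a \<and> g j = b"
  unfolding mismatch_def by auto

text \<open>Cancelling the l - 1 common entries of two consecutive equal windows leaves
  {#f i, g (i - l)#} = {#f (i - l), g i#}.\<close>

lemma mismatch_eq_if_windows_eq:
  assumes "l \<ge> 1" "window l f (i - 1) = window l g (i - 1)" "window l f i = window l g i"
  shows "mismatch f g i = mismatch f g (i - int l)"
proof -
  define F G where "F = mset (map f [i - int l + 1 .. i - 1])" and "G = mset (map g [i - int l + 1 .. i - 1])"
  have first: "window l h (i - 1) = add_mset (h (i - int l)) (mset (map h [i - int l + 1 .. i - 1]))"
    for h :: "int \<Rightarrow> 'a"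
    using window_first[OF assms(1), of h "i - 1"] by (simp add: algebra_simps)
  have shifted_out: "add_mset (f (i - int l)) F = add_mset (g (i - int l)) G"
    using assms(2) unfolding first F_def G_def .
  have shifted_in: "add_mset (f i) F = add_mset (g i) G"
    using assms(3) unfolding window_last[OF assms(1)] F_def G_def .
  have "{#f i, g (i - int l)#} + G = add_mset (f i) (add_mset (f (i - int l)) F)"
    by (simp add: shifted_out)
  also have "\<dots> = add_mset (f (i - int l)) (add_mset (f i) F)"
    by (rule add_mset_commute)
  also have "\<dots> = {#f (i - int l), g i#} + G"
    by (simp add: shifted_in)
  finally have "{#f i, g (i - int l)#} = {#f (i - int l), g i#}"
    by (rule add_right_cancel[THEN iffD1])
  then have "f i = f (i - int l) \<and> g i = g (i - int l) \<or> f i = g i \<and> f (i - int l) = g (i - int l)"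
    by (auto simp: add_eq_conv_diff)
  then show ?thesis
    unfolding mismatch_def by auto
qed

lemma mismatch_after_first:
  assumes "l \<ge> 2" and below_k: "\<And>j. j < k \<Longrightarrow> f j = g j" and "f k \<noteq> g k"
    and "window l f (k + 1) = window l g (k + 1)"
  shows "mismatch f g (k + 1) = Some (g k, f k)"
proof -
  have split: "window l h (k + 1) = add_mset (h (k + 1)) (add_mset (h k) (mset (map h [k - int l + 2 .. k - 1])))"
    for h :: "int \<Rightarrow> 'a"
    using window_last_two[of l h "k + 1"] assms(1) by (simp add: algebra_simps)
  have common: "map f [k - int l + 2 .. k - 1] = map g [k - int l + 2 .. k - 1]"
    by (intro map_cong) (auto intro: below_k)
  have "{#f (k + 1), f k#} + mset (map g [k - int l + 2 .. k - 1]) =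
        {#g (k + 1), g k#} + mset (map g [k - int l + 2 .. k - 1])"
    using assms(4) unfolding split common by simp
  then have "{#f (k + 1), f k#} = {#g (k + 1), g k#}"
    by (rule add_right_cancel[THEN iffD1])
  then show ?thesis
    using assms(3) unfolding mismatch_def by (auto simp: add_eq_conv_diff)
qed

lemma periodic_extension:
  fixes h :: "int \<Rightarrow> 'a" and L :: int
  assumes "L > 0" and periodic: "\<And>i. k + L \<le> i \<Longrightarrow> i \<le> M \<Longrightarrow> h i = h (i - L)"
  shows "k \<le> j \<Longrightarrow> j \<le> M \<Longrightarrow> h j = h (k + (j - k) mod L)"
proof (induction "nat (j - k)" arbitrary: j rule: less_induct)
  case less
  show ?case
  proof (cases "j < k + L")
    case True
    then have "(j - k) mod L = j - k" using less.prems by (intro mod_pos_pos_trivial) auto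
    then show ?thesis by simp
  next
    case False
    then have "h j = h (j - L)" using periodic less.prems by simp
    also have "\<dots> = h (k + (j - L - k) mod L)"
      using less.hyps[of "j - L"] less.prems False assms(1) by simp
    also have "(j - L - k) mod L = (j - k) mod L"
    proof -
      have "j - L - k = (j - k) + (- 1) * L" by simp
      then show ?thesis by (simp only: mod_mult_self1)
    qed
    finally show ?thesis .
  qed
qed

definition swap_pattern :: "int \<Rightarrow> int \<Rightarrow> nat \<Rightarrow> 'a \<Rightarrow> 'a \<Rightarrow> int \<Rightarrow> ('a \<times> 'a) option" where
  "swap_pattern k m l a b j =
     (if k \<le> j \<and> j \<le> m then
        if (j - k) mod int l = 0 then Some (a, b) else if (j - k) mod int l = 1 then Some (b, a) else None
      else None)"

lemma swap_pattern_at_pairs: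
  assumes "l \<ge> 2" "m = k + int t * int l + 1" "s \<le> t"
  shows "swap_pattern k m l a b (k + int s * int l) = Some (a, b)"
    and "swap_pattern k m l a b (k + int s * int l + 1) = Some (b, a)"
proof -
  have "int s * int l \<le> int t * int l" using assms(3) by (simp add: mult_right_mono)
  then have range: "k \<le> k + int s * int l" "k + int s * int l + 1 \<le> m"
    using assms(2) by (simp_all flip: of_nat_mult)
  have "(int s * int l + 1) mod int l = 1 mod int l"
    by (simp only: mod_mult_self3)
  then have "(int s * int l + 1) mod int l = 1"
    using assms(1) by simp
  then show "swap_pattern k m l a b (k + int s * int l) = Some (a, b)"
    "swap_pattern k m l a b (k + int s * int l + 1) = Some (b, a)"
    using range unfolding swap_pattern_def by (simp_all add: add.assoc)
qed

lemma swap_pattern_eq_None: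
  assumes l: "l \<ge> 2" and m: "m = k + int t * int l + 1"
    and off: "\<And>s. s \<le> t \<Longrightarrow> j \<noteq> k + int s * int l \<and> j \<noteq> k + int s * int l + 1"
  shows "swap_pattern k m l a b j = None"
proof (rule ccontr)
  assume "swap_pattern k m l a b j \<noteq> None"
  then have j: "k \<le> j" "j \<le> m" and residue: "(j - k) mod int l \<in> {0, 1}"
    unfolding swap_pattern_def by (auto split: if_splits)
  define s where "s = nat ((j - k) div int l)"
  have decomposition: "j - k = int s * int l + (j - k) mod int l"
    using j l unfolding s_def by (simp add: pos_imp_zdiv_nonneg_iff)
  have "s \<le> t"
  proof (rule ccontr)
    assume "\<not> s \<le> t"
    then have "int t * int l + int l \<le> int s * int l"
      using mult_right_mono[of "int t + 1" "int s" "int l"] by (simp add: algebra_simps)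
    then show False using decomposition j m l residue by auto
  qed
  then show False using off[of s] decomposition residue by auto
qed

lemma mismatch_pattern_if_windows_agree:
  fixes f g :: "int \<Rightarrow> 'a"
  assumes l: "l \<ge> 3"
    and below_k: "\<And>j. j < k \<Longrightarrow> f j = g j" and at_k: "f k \<noteq> g k"
    and above_m: "\<And>j. m < j \<Longrightarrow> f j = g j" and at_m: "f m \<noteq> g m"
    and windows: "\<And>i. i \<noteq> k \<Longrightarrow> i \<noteq> m + int l - 1 \<Longrightarrow> window l f i = window l g i"
  shows "(m - k) mod int l = 1" and "mismatch f g j = swap_pattern k m l (f k) (g k) j"
proof -
  define L where "L = int l"
  define pattern where "pattern r = swap_pattern 0 (L - 1) l (f k) (g k) r" for r
  have L: "L \<ge> 3" using l unfolding L_def by simp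
  have "k \<le> m" using at_k above_m by force
  have outside: "mismatch f g j = None" if "j < k \<or> m < j" for j
    using that below_k above_m by auto
  have step: "mismatch f g i = mismatch f g (i - L)" if "k + 2 \<le> i" "i \<le> m + L - 2" for i
    using that L \<open>k \<le> m\<close> by (intro mismatch_eq_if_windows_eq[of l, folded L_def] windows) (auto simp: L_def)
  have second: "mismatch f g (k + 1) = Some (g k, f k)"
    using L \<open>k \<le> m\<close> by (intro mismatch_after_first[of l] below_k at_k windows) (auto simp: L_def)
  have residue: "mismatch f g (k + r) = pattern r" if r: "0 \<le> r" "r < L" for r
  proof -
    consider "r = 0" | "r = 1" | "2 \<le> r" "k + r \<le> m + L - 2" | "m < k + r"
      using r L by linarith
    then show ?thesis
    proof cases
      case 3
      then show ?thesis
        using step[of "k + r"] outside[of "k + r - L"] r unfolding pattern_def swap_pattern_def L_def by simp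
    qed (use at_k second outside r L in \<open>auto simp: pattern_def swap_pattern_def L_def\<close>)
  qed
  have periodic: "mismatch f g j = pattern ((j - k) mod L)" if "k \<le> j" "j \<le> m + L - 2" for j
    using periodic_extension[of L k "m + L - 2" "mismatch f g" j] step that L residue by simp
  show m_residue: "(m - k) mod int l = 1"
  proof (rule ccontr)
    assume "(m - k) mod int l \<noteq> 1"
    moreover have "mismatch f g m \<noteq> None"
      using at_m by simp
    then have "pattern ((m - k) mod L) \<noteq> None"
      using periodic[of m] \<open>k \<le> m\<close> L by simp
    ultimately have "(m - k) mod L = 0" unfolding pattern_def swap_pattern_def L_def by (auto split: if_splits)
    \<comment> \<open>here l \<ge> 3 is needed: the mismatch at m + 1 \<le> m + l - 2 would be a swapped pair\<close>
    then have "(m + 1 - k) mod L = 1"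
      using L mod_add_left_eq[of "m - k" L 1] by (simp add: algebra_simps)
    then have "mismatch f g (m + 1) \<noteq> None"
      using periodic[of "m + 1"] \<open>k \<le> m\<close> L at_k unfolding pattern_def swap_pattern_def L_def by simp
    then show False using outside[of "m + 1"] by simp
  qed
  show "mismatch f g j = swap_pattern k m l (f k) (g k) j"
  proof (cases "k \<le> j \<and> j \<le> m")
    case True
    then show ?thesis
      using periodic[of j] L unfolding pattern_def swap_pattern_def L_def by simp
  qed (use outside[of j] in \<open>auto simp: swap_pattern_def\<close>)
qed

section \<open>Inversions under swaps of adjacent pairs\<close>

definition inversions :: "nat list \<Rightarrow> (nat \<times> nat) set" where
  "inversions w = {(i, j). i < j \<and> j < length w \<and> w ! j < w ! i}"

lemma Inv_eq_card_inversions: "Inv w = card (inversions w)"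
  unfolding Inv_def inversions_def by simp

lemma finite_inversions: "finite (inversions w)"
  unfolding inversions_def by (rule finite_subset[of _ "{..<length w} \<times> {..<length w}"]) auto

lemma inversions_swap_ascent:
  assumes p: "p + 1 < length z" and ascent: "z ! p < z ! (p + 1)"
  defines "\<sigma> \<equiv> \<lambda>i. if i = p then p + 1 else if i = p + 1 then p else i"
  shows "map_prod \<sigma> \<sigma> ` inversions (z[p := z ! (p + 1), p + 1 := z ! p]) = insert (p + 1, p) (inversions z)"
proof -
  define z' where "z' = z[p := z ! (p + 1), p + 1 := z ! p]"
  have [simp]: "length z' = length z" unfolding z'_def by simp
  have z': "z' ! i = z ! \<sigma> i" if "i < length z" for i
    using that p unfolding z'_def \<sigma>_def by (auto simp: nth_list_update)
  have \<sigma>_\<sigma> [simp]: "\<sigma> (\<sigma> i) = i" for i unfolding \<sigma>_def by auto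
  have [simp]: "\<sigma> i < length z \<longleftrightarrow> i < length z" for i using p unfolding \<sigma>_def by auto
  have \<sigma>_mono: "\<sigma> i < \<sigma> j \<longleftrightarrow> i < j" if "(i, j) \<noteq> (p, p + 1)" "(j, i) \<noteq> (p, p + 1)" for i j
    using that unfolding \<sigma>_def by auto
  show ?thesis
    unfolding z'_def[symmetric]
  proof (intro equalityI subsetI)
    fix u assume "u \<in> map_prod \<sigma> \<sigma> ` inversions z'"
    then obtain i j where "u = (\<sigma> i, \<sigma> j)" "i < j" "j < length z" "z ! \<sigma> j < z ! \<sigma> i"
      unfolding inversions_def by (auto simp: z')
    then show "u \<in> insert (p + 1, p) (inversions z)"
      using \<sigma>_mono[of i j] p ascent unfolding inversions_def \<sigma>_def by (auto split: if_splits)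
  next
    fix u assume u: "u \<in> insert (p + 1, p) (inversions z)"
    show "u \<in> map_prod \<sigma> \<sigma> ` inversions z'"
    proof (cases "u = (p + 1, p)")
      case True
      have "(p, p + 1) \<in> inversions z'"
        using p ascent z'[of p] z'[of "p + 1"] unfolding inversions_def \<sigma>_def by simp
      moreover have "u = map_prod \<sigma> \<sigma> (p, p + 1)" using True unfolding \<sigma>_def by simp
      ultimately show ?thesis by blast
    next
      case False
      then obtain i j where ij: "u = (i, j)" "(i, j) \<in> inversions z" using u by (cases u) auto
      then have "(\<sigma> i, \<sigma> j) \<in> inversions z'"
        using \<sigma>_mono[of i j] ascent z'[of "\<sigma> i"] z'[of "\<sigma> j"] unfolding inversions_def
        by (cases "(i, j) = (p, p + 1)") auto
      moreover have "u = map_prod \<sigma> \<sigma> (\<sigma> i, \<sigma> j)" using ij by simp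
      ultimately show ?thesis by blast
    qed
  qed
qed

lemma Inv_swap_ascent:
  assumes "p + 1 < length z" "z ! p < z ! (p + 1)"
  shows "Inv (z[p := z ! (p + 1), p + 1 := z ! p]) = Inv z + 1"
proof -
  define \<sigma> where "\<sigma> i = (if i = p then p + 1 else if i = p + 1 then p else i)" for i
  have "inj (map_prod \<sigma> \<sigma>)"
    by (rule inj_on_inverseI[where g = "map_prod \<sigma> \<sigma>"]) (auto simp: \<sigma>_def)
  then have "Inv (z[p := z ! (p + 1), p + 1 := z ! p]) =
      card (map_prod \<sigma> \<sigma> ` inversions (z[p := z ! (p + 1), p + 1 := z ! p]))"
    unfolding Inv_eq_card_inversions by (simp add: card_image inj_on_subset)
  also have "\<dots> = card (insert (p + 1, p) (inversions z))"
    using inversions_swap_ascent[OF assms] unfolding \<sigma>_def by presburger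
  also have "\<dots> = Inv z + 1"
    unfolding Inv_eq_card_inversions using finite_inversions by (simp add: inversions_def)
  finally show ?thesis .
qed

text \<open>x arises from y by turning the pairs (b, a) at the 0-based positions p + s l, p + s l + 1,
  s < T, into (a, b).\<close>

definition swapped_pairs :: "nat \<Rightarrow> nat \<Rightarrow> nat \<Rightarrow> nat \<Rightarrow> nat \<Rightarrow> nat list \<Rightarrow> nat list \<Rightarrow> bool" where
  "swapped_pairs l p T a b x y \<longleftrightarrow> length x = length y \<and>
     (\<forall>s<T. p + s * l + 1 < length x \<and> x ! (p + s * l) = a \<and> x ! (p + s * l + 1) = b \<and>
            y ! (p + s * l) = b \<and> y ! (p + s * l + 1) = a) \<and>
     (\<forall>j<length x. (\<forall>s<T. j \<noteq> p + s * l \<and> j \<noteq> p + s * l + 1) \<longrightarrow> x ! j = y ! j)"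

lemma swapped_pairs_0: "swapped_pairs l p 0 a b x y \<longleftrightarrow> x = y"
  unfolding swapped_pairs_def by (auto intro: nth_equalityI)

lemma swapped_pairs_Suc_undo_last:
  assumes "swapped_pairs l p (Suc T) a b x y" "l \<ge> 2"
  defines "r \<equiv> p + T * l"
  shows "swapped_pairs l p T a b (x[r := b, r + 1 := a]) y"
proof -
  have len: "length x = length y"
    and pairs: "\<And>s. s < Suc T \<Longrightarrow> p + s * l + 1 < length x \<and> x ! (p + s * l) = a \<and>
      x ! (p + s * l + 1) = b \<and> y ! (p + s * l) = b \<and> y ! (p + s * l + 1) = a"
    and rest: "\<And>j. j < length x \<Longrightarrow> \<forall>s<Suc T. j \<noteq> p + s * l \<and> j \<noteq> p + s * l + 1 \<Longrightarrow> x ! j = y ! j"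
    using assms(1) unfolding swapped_pairs_def by auto
  have apart: "p + s * l + 1 < r" if "s < T" for s
  proof -
    have "(s + 1) * l \<le> T * l" using that by (intro mult_le_mono1) simp
    then show ?thesis using assms(2) unfolding r_def by simp
  qed
  show ?thesis
    unfolding swapped_pairs_def
  proof (intro conjI)
    show "length (x[r := b, r + 1 := a]) = length y" using len by simp
    show "\<forall>s<T. p + s * l + 1 < length (x[r := b, r + 1 := a]) \<and> x[r := b, r + 1 := a] ! (p + s * l) = a \<and>
        x[r := b, r + 1 := a] ! (p + s * l + 1) = b \<and> y ! (p + s * l) = b \<and> y ! (p + s * l + 1) = a"
    proof (intro allI impI)
      fix s assume "s < T"
      then show "p + s * l + 1 < length (x[r := b, r + 1 := a]) \<and> x[r := b, r + 1 := a] ! (p + s * l) = a \<and>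
          x[r := b, r + 1 := a] ! (p + s * l + 1) = b \<and> y ! (p + s * l) = b \<and> y ! (p + s * l + 1) = a"
        using pairs[of s] apart[of s] by (auto simp: nth_list_update)
    qed
    show "\<forall>j<length (x[r := b, r + 1 := a]). (\<forall>s<T. j \<noteq> p + s * l \<and> j \<noteq> p + s * l + 1) \<longrightarrow>
        x[r := b, r + 1 := a] ! j = y ! j"
    proof (intro allI impI)
      fix j assume j: "j < length (x[r := b, r + 1 := a])" "\<forall>s<T. j \<noteq> p + s * l \<and> j \<noteq> p + s * l + 1"
      show "x[r := b, r + 1 := a] ! j = y ! j"
      proof (cases "j = r \<or> j = r + 1")
        case True
        then show ?thesis using pairs[of T] unfolding r_def by (auto simp: nth_list_update)
      next
        case False
        then have "\<forall>s<Suc T. j \<noteq> p + s * l \<and> j \<noteq> p + s * l + 1"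
          using j(2) unfolding r_def less_Suc_eq by blast
        then show ?thesis using rest j(1) False by simp
      qed
    qed
  qed
qed

lemma Inv_swapped_pairs:
  assumes "l \<ge> 2" "a \<noteq> b" "swapped_pairs l p T a b x y"
  shows "int (Inv x) = int (Inv y) + (if b < a then int T else - int T)"
  using assms(3)
proof (induction T arbitrary: x)
  case 0
  then show ?case by (simp add: swapped_pairs_0)
next
  case (Suc T)
  define r where "r = p + T * l"
  define z where "z = x[r := b, r + 1 := a]"
  have IH: "int (Inv z) = int (Inv y) + (if b < a then int T else - int T)"
    using Suc.IH swapped_pairs_Suc_undo_last[OF Suc.prems assms(1)] unfolding z_def r_def by blast
  have x: "r + 1 < length x" "x ! r = a" "x ! (r + 1) = b"
    using Suc.prems unfolding swapped_pairs_def r_def by auto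
  then have z: "r + 1 < length z" "z ! r = b" "z ! (r + 1) = a"
    unfolding z_def by (auto simp: nth_list_update)
  show ?case
  proof (cases "b < a")
    case True
    have "x = z[r := z ! (r + 1), r + 1 := z ! r]"
      using x unfolding z_def by (auto intro: nth_equalityI simp: nth_list_update)
    then have "Inv x = Inv z + 1"
      using Inv_swap_ascent[of r z] z True by simp
    then show ?thesis using IH True by simp
  next
    case False
    have "z = x[r := x ! (r + 1), r + 1 := x ! r]"
      using x unfolding z_def by simp
    then have "Inv z = Inv x + 1"
      using Inv_swap_ascent[of r x] x False assms(2) by simp
    then show ?thesis using IH False by simp
  qed
qed

section \<open>Read distance three\<close>

lemma swapped_pairs_if_mismatch_eq_swap_pattern:
  assumes len: "length x = length y" and l: "l \<ge> 2"
    and km: "1 \<le> k" "k \<le> m" "m \<le> int (length x)" and m_residue: "(m - k) mod int l = 1"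
    and pattern: "\<And>j. mismatch (entry x) (entry y) j = swap_pattern k m l (entry x k) (entry y k) j"
  shows "swapped_pairs l (nat (k - 1)) (Suc (nat ((m - k) div int l))) (entry x k) (entry y k) x y"
proof -
  define p t where "p = nat (k - 1)" and "t = nat ((m - k) div int l)"
  have "int t = (m - k) div int l"
    using km l unfolding t_def by (simp add: pos_imp_zdiv_nonneg_iff)
  then have m: "m = k + int t * int l + 1"
    using div_mult_mod_eq[of "m - k" "int l"] m_residue by simp
  have position: "int (p + s * l) + 1 = k + int s * int l" for s
    using km unfolding p_def by simp
  have entry_pos: "entry z (k + int s * int l + int r) = z ! (p + s * l + r)"
    if "p + s * l + r < length z" for z :: "nat list" and s r
    using entry_Suc[OF that] km unfolding p_def by (simp add: algebra_simps)
  have in_range: "p + s * l + 1 < length x" if "s \<le> t" for s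
  proof -
    have "int s * int l \<le> int t * int l" using that by (simp add: mult_right_mono)
    then show ?thesis using position[of s] m km by linarith
  qed
  have pairs: "x ! (p + s * l) = entry x k \<and> x ! (p + s * l + 1) = entry y k \<and>
      y ! (p + s * l) = entry y k \<and> y ! (p + s * l + 1) = entry x k" if "s \<le> t" for s
  proof -
    have "mismatch (entry x) (entry y) (k + int s * int l) = Some (entry x k, entry y k)"
      "mismatch (entry x) (entry y) (k + int s * int l + 1) = Some (entry y k, entry x k)"
      unfolding pattern using swap_pattern_at_pairs[OF l m that] .
    moreover have "z ! (p + s * l) = entry z (k + int s * int l)"
      "z ! (p + s * l + 1) = entry z (k + int s * int l + 1)" if "length z = length x" for z
      using entry_pos[of s 0 z] entry_pos[of s 1 z] in_range[OF \<open>s \<le> t\<close>] that by simp_all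
    ultimately show ?thesis using len by simp
  qed
  have rest: "x ! j = y ! j" if j: "j < length x" "\<forall>s<Suc t. j \<noteq> p + s * l \<and> j \<noteq> p + s * l + 1" for j
  proof -
    have "int j + 1 \<noteq> k + int s * int l \<and> int j + 1 \<noteq> k + int s * int l + 1" if "s \<le> t" for s
      using j(2) that unfolding position[symmetric] by (simp add: less_Suc_eq_le flip: of_nat_mult of_nat_add of_nat_Suc)
    then have "mismatch (entry x) (entry y) (int j + 1) = None"
      unfolding pattern by (intro swap_pattern_eq_None[OF l m])
    then show ?thesis using entry_Suc[of j x] entry_Suc[of j y] j(1) len by simp
  qed
  show ?thesis
    unfolding swapped_pairs_def p_def[symmetric] t_def[symmetric] less_Suc_eq_le
    using len in_range pairs rest[unfolded less_Suc_eq_le] by simp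
qed

lemma swapped_pairs_if_read_distance_lt3:
  assumes l: "l \<ge> 3" and len: "length x = length y" and "x \<noteq> y"
    and dist: "hamming (read_vec l x) (read_vec l y) < 3"
  obtains p t a b where "a \<noteq> b" "swapped_pairs l p (Suc t) a b x y"
proof -
  define D where "D = {j. entry x j \<noteq> entry y j}"
  have "D \<subseteq> {1 .. int (length x)}"
    using len entry_eq_0[of _ x] entry_eq_0[of _ y] unfolding D_def by (auto simp: not_less[symmetric])
  then have "finite D" by (rule finite_subset) simp
  obtain j where "j < length x" "x ! j \<noteq> y ! j"
    using \<open>x \<noteq> y\<close> len nth_equalityI by blast
  then have "int j + 1 \<in> D"
    using len entry_Suc[of j x] entry_Suc[of j y] unfolding D_def by simp
  then have "D \<noteq> {}" by blast
  define k m where "k = Min D" and "m = Max D"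
  have k: "k \<in> D" "\<And>j. j < k \<Longrightarrow> j \<notin> D" and m: "m \<in> D" "\<And>j. m < j \<Longrightarrow> j \<notin> D"
    using \<open>finite D\<close> \<open>D \<noteq> {}\<close> unfolding k_def m_def by auto
  have range: "1 \<le> k" "k \<le> m" "m \<le> int (length x)"
    using k m \<open>D \<subseteq> _\<close> by force+
  have windows: "window l (entry x) i = window l (entry y) i" if "i \<noteq> k" "i \<noteq> m + int l - 1" for i
    using windows_agree_except_ends[OF len dist _ _ _ _ _ that] k m l unfolding D_def by auto
  note pattern = mismatch_pattern_if_windows_agree[OF l, of k "entry x" "entry y" m]
  show ?thesis
  proof
    show "entry x k \<noteq> entry y k" using k unfolding D_def by simp
    show "swapped_pairs l (nat (k - 1)) (Suc (nat ((m - k) div int l))) (entry x k) (entry y k) x y"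
      using swapped_pairs_if_mismatch_eq_swap_pattern[OF len _ range] pattern windows k m l unfolding D_def
      by auto
  qed
qed

lemma length_concat_pairs: "length (concat (map (\<lambda>s. [f s, g s]) [0..<N])) = 2 * N"
  by (induction N) auto

lemma nth_concat_pairs:
  "r < 2 * N \<Longrightarrow> concat (map (\<lambda>s. [f s, g s]) [0..<N]) ! r = (if even r then f (r div 2) else g (r div 2))"
proof (induction N arbitrary: r)
  case (Suc N)
  then show ?case
    by (cases "r < 2 * N") (auto simp: nth_append length_concat_pairs less_Suc_eq elim: evenE oddE)
qed simp

definition sampled_pairs :: "nat \<Rightarrow> nat list \<Rightarrow> int \<Rightarrow> nat \<Rightarrow> nat list" where
  "sampled_pairs l xs i t =
     concat (map (\<lambda>s. [entry xs (i + int s * int l), entry xs (i + int s * int l + 1)]) [0..<t + 1])"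

lemma good_iff_sampled_pairs:
  "good q l xs \<longleftrightarrow>
     (\<forall>t. (log q (length xs) + log q (log q (length xs))) / 2 - 1 \<le> real t \<longrightarrow>
       (\<forall>i. 1 \<le> i \<and> i \<le> int (length xs) - int t * int l - 1 \<longrightarrow> \<not> alternating (sampled_pairs l xs i t)))"
  unfolding good_def sampled_pairs_def ..

lemma length_sampled_pairs: "length (sampled_pairs l xs i t) = 2 * t + 2"
  unfolding sampled_pairs_def by (simp add: length_concat_pairs)

lemma nth_sampled_pairs:
  assumes "s \<le> t"
  shows "sampled_pairs l xs i t ! (2 * s) = entry xs (i + int s * int l)"
    and "sampled_pairs l xs i t ! (2 * s + 1) = entry xs (i + int s * int l + 1)"
  using assms unfolding sampled_pairs_def by (subst nth_concat_pairs; simp)+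

lemma alternating_sampled_pairs_iff:
  assumes "p + t * l + 1 < length xs"
  shows "alternating (sampled_pairs l xs (int p + 1) t) \<longleftrightarrow>
    (\<exists>a b. a \<noteq> b \<and> (\<forall>s\<le>t. xs ! (p + s * l) = a \<and> xs ! (p + s * l + 1) = b))"
proof -
  have entries: "sampled_pairs l xs (int p + 1) t ! (2 * s) = xs ! (p + s * l)"
    "sampled_pairs l xs (int p + 1) t ! (2 * s + 1) = xs ! (p + s * l + 1)" if "s \<le> t" for s
  proof -
    have "p + s * l + 1 < length xs" using assms mult_le_mono1[OF that, of l] by linarith
    then show "sampled_pairs l xs (int p + 1) t ! (2 * s) = xs ! (p + s * l)"
      "sampled_pairs l xs (int p + 1) t ! (2 * s + 1) = xs ! (p + s * l + 1)"
      using nth_sampled_pairs[OF that] entry_Suc[of "p + s * l" xs] entry_Suc[of "p + s * l + 1" xs]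
      by (simp_all add: algebra_simps)
  qed
  show ?thesis
  proof
    assume "alternating (sampled_pairs l xs (int p + 1) t)"
    then obtain a b where "a \<noteq> b"
      and ab: "\<And>r. r < 2 * t + 2 \<Longrightarrow> sampled_pairs l xs (int p + 1) t ! r = (if even r then a else b)"
      unfolding alternating_def length_sampled_pairs by blast
    have "xs ! (p + s * l) = a \<and> xs ! (p + s * l + 1) = b" if "s \<le> t" for s
      using ab[of "2 * s"] ab[of "2 * s + 1"] entries[OF that] that by simp
    then show "\<exists>a b. a \<noteq> b \<and> (\<forall>s\<le>t. xs ! (p + s * l) = a \<and> xs ! (p + s * l + 1) = b)"
      using \<open>a \<noteq> b\<close> by blast
  next
    assume "\<exists>a b. a \<noteq> b \<and> (\<forall>s\<le>t. xs ! (p + s * l) = a \<and> xs ! (p + s * l + 1) = b)"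
    then obtain a b where "a \<noteq> b" and ab: "\<And>s. s \<le> t \<Longrightarrow> xs ! (p + s * l) = a \<and> xs ! (p + s * l + 1) = b"
      by blast
    have "sampled_pairs l xs (int p + 1) t ! r = (if even r then a else b)" if "r < 2 * t + 2" for r
    proof -
      define s where "s = r div 2"
      have "s \<le> t" using that unfolding s_def by simp
      consider "r = 2 * s" | "r = 2 * s + 1" unfolding s_def by linarith
      then show ?thesis
        by cases (use entries[OF \<open>s \<le> t\<close>] ab[OF \<open>s \<le> t\<close>] in simp_all)
    qed
    then show "alternating (sampled_pairs l xs (int p + 1) t)"
      unfolding alternating_def length_sampled_pairs using \<open>a \<noteq> b\<close> by blast
  qed
qed

lemma good_imp_swapped_pairs_short:
  assumes "good q l x" "swapped_pairs l p (Suc t) a b x y" "a \<noteq> b"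
  shows "real t < (log q (length x) + log q (log q (length x))) / 2 - 1"
proof (rule ccontr)
  assume "\<not> ?thesis"
  moreover have "p + t * l + 1 < length x"
    using assms(2) unfolding swapped_pairs_def by blast
  moreover have "alternating (sampled_pairs l x (int p + 1) t)"
    using assms(2,3) calculation(2) unfolding alternating_sampled_pairs_iff[OF calculation(2)] swapped_pairs_def
    by (metis less_Suc_eq_le)
  ultimately show False
    using assms(1) unfolding good_iff_sampled_pairs by (force simp flip: of_nat_mult)
qed

lemma read_distance_code_C:
  assumes l: "l \<ge> 3" and x: "x \<in> code_C q l n c" and y: "y \<in> code_C q l n c" and "x \<noteq> y"
  shows "3 \<le> hamming (read_vec l x) (read_vec l y)"
proof (rule ccontr)
  assume "\<not> ?thesis"
  moreover have len: "length x = n" "length y = n"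
    using x y unfolding code_C_def words_def by auto
  ultimately obtain p t a b where "a \<noteq> b" and swapped: "swapped_pairs l p (Suc t) a b x y"
    using swapped_pairs_if_read_distance_lt3[OF l _ \<open>x \<noteq> y\<close>] by (metis not_le)
  have "real t < (log q n + log q (log q n)) / 2 - 1"
    using good_imp_swapped_pairs_short[OF _ swapped \<open>a \<noteq> b\<close>] x len unfolding code_C_def by simp
  then have "int (Suc t) < Pval q n"
    unfolding Pval_def by linarith
  have "int (Inv x) mod Pval q n = int (Inv y) mod Pval q n"
    using x y unfolding code_C_def by simp
  then have "Pval q n dvd int (Inv x) - int (Inv y)"
    by (rule mod_eq_dvd_iff[THEN iffD1])
  moreover have "int (Inv x) - int (Inv y) = (if b < a then int (Suc t) else - int (Suc t))"
    using Inv_swapped_pairs[OF _ \<open>a \<noteq> b\<close> swapped] l by simp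
  ultimately have "Pval q n dvd int (Suc t)"
    by (metis dvd_minus_iff)
  then show False
    using zdvd_imp_le[of "Pval q n" "int (Suc t)"] \<open>int (Suc t) < Pval q n\<close> by simp
qed

lemma is_read_code_code_C: "l \<ge> 3 \<Longrightarrow> is_read_code l q n 3 (code_C q l n c)"
  unfolding is_read_code_def using read_distance_code_C by (auto simp: code_C_def)

section \<open>Counting words that are not good\<close>

lemma finite_words: "finite (words q n)"
  unfolding words_def using finite_lists_length_eq[of "{..<q}" n] by (simp add: conj_commute)

lemma card_words: "card (words q n) = q ^ n"
  unfolding words_def using card_lists_length_eq[of "{..<q}" n] by (simp add: conj_commute)

lemma card_words_fixed_entries:
  assumes S: "S \<subseteq> {..<n}"
  shows "card {xs \<in> words q n. \<forall>j\<in>S. xs ! j = w j} \<le> q ^ (n - card S)"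
proof -
  define B where "B = {xs \<in> words q n. \<forall>j\<in>S. xs ! j = w j}"
  define F where "F j = (if j \<in> S then {w j} else {..<q})" for j
  have "inj_on (\<lambda>xs. restrict ((!) xs) {..<n}) B"
  proof (rule inj_onI, rule nth_equalityI)
    fix xs ys i assume "xs \<in> B" "ys \<in> B" and eq: "restrict ((!) xs) {..<n} = restrict ((!) ys) {..<n}"
    then show "length xs = length ys" by (simp add: B_def words_def)
    assume "i < length xs"
    then show "xs ! i = ys ! i" using fun_cong[OF eq, of i] \<open>xs \<in> B\<close> by (simp add: B_def words_def)
  qed
  moreover have "(\<lambda>xs. restrict ((!) xs) {..<n}) ` B \<subseteq> PiE {..<n} F"
    by (auto simp: B_def words_def F_def subset_eq)
  moreover have "finite (PiE {..<n} F)"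
    by (intro finite_PiE) (auto simp: F_def)
  ultimately have "card B \<le> card (PiE {..<n} F)"
    by (metis card_image card_mono)
  also have "\<dots> = (\<Prod>j<n. if j \<in> S then 1 else q)"
    unfolding card_PiE[OF finite_lessThan] F_def by (intro prod.cong) auto
  also have "\<dots> = q ^ (n - card S)"
    using S by (simp add: prod.If_cases Int_absorb1 card_Diff_subset finite_subset Diff_eq[symmetric])
  finally show ?thesis unfolding B_def .
qed

lemma card_pair_positions:
  assumes "l \<ge> 2"
  shows "card ((\<lambda>s. p + s * l) ` {..t} \<union> (\<lambda>s. p + s * l + 1) ` {..t}) = 2 * t + 2"
proof -
  have "s * l \<noteq> s' * l + 1" for s s'
  proof
    assume "s * l = s' * l + 1"
    then have "(s - s') * l = 1" by (simp add: diff_mult_distrib)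
    then show False using assms by simp
  qed
  then have "(\<lambda>s. p + s * l) ` {..t} \<inter> (\<lambda>s. p + s * l + 1) ` {..t} = {}" by auto
  moreover have "card ((\<lambda>s. p + s * l) ` {..t}) = t + 1" "card ((\<lambda>s. p + s * l + 1) ` {..t}) = t + 1"
    using assms by (simp_all add: card_image inj_on_def)
  ultimately show ?thesis by (simp add: card_Un_disjoint)
qed

lemma card_alternating_sampled_pairs:
  assumes l: "l \<ge> 2" and i: "1 \<le> i" "i + int t * int l + 1 \<le> int n"
  shows "card {xs \<in> words q n. alternating (sampled_pairs l xs i t)} * q ^ (2 * t) \<le> q ^ n"
proof -
  define p where "p = nat (i - 1)"
  define S0 S1 where "S0 = (\<lambda>s. p + s * l) ` {..t}" and "S1 = (\<lambda>s. p + s * l + 1) ` {..t}"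
  define w where "w a b j = (if (j - p) mod l = 0 then a else b)" for a b j :: nat
  have i_eq: "i = int p + 1" using i unfolding p_def by simp
  have "p + t * l + 1 < n"
    using i unfolding p_def by (simp add: of_nat_mult[symmetric] del: of_nat_mult)
  then have "p + s * l + 1 < n" if "s \<le> t" for s
    using mult_le_mono1[OF that, of l] by linarith
  then have S: "S0 \<union> S1 \<subseteq> {..<n}"
    unfolding S0_def S1_def by fastforce
  have card_S: "card (S0 \<union> S1) = 2 * t + 2"
    unfolding S0_def S1_def by (rule card_pair_positions[OF l])
  have "{xs \<in> words q n. alternating (sampled_pairs l xs i t)} \<subseteq>
      (\<Union>a<q. \<Union>b<q. {xs \<in> words q n. \<forall>j\<in>S0 \<union> S1. xs ! j = w a b j})"
  proof safe
    fix xs assume xs: "xs \<in> words q n" and "alternating (sampled_pairs l xs i t)"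
    then obtain a b where ab: "\<And>s. s \<le> t \<Longrightarrow> xs ! (p + s * l) = a \<and> xs ! (p + s * l + 1) = b"
      using alternating_sampled_pairs_iff[of p t l xs] \<open>p + t * l + 1 < n\<close> unfolding i_eq words_def by auto
    then have "xs ! (p + s * l) = w a b (p + s * l) \<and> xs ! (p + s * l + 1) = w a b (p + s * l + 1)"
      if "s \<le> t" for s
      using ab[OF that] l unfolding w_def by (simp add: mod_Suc)
    then have "\<forall>j\<in>S0 \<union> S1. xs ! j = w a b j"
      unfolding S0_def S1_def by auto
    moreover have "a < q" "b < q"
      using ab[of 0] \<open>p + t * l + 1 < n\<close> xs nth_mem[of p xs] nth_mem[of "p + 1" xs]
      unfolding words_def by auto
    ultimately show "xs \<in> (\<Union>a<q. \<Union>b<q. {xs \<in> words q n. \<forall>j\<in>S0 \<union> S1. xs ! j = w a b j})"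
      using xs by blast
  qed
  then have "card {xs \<in> words q n. alternating (sampled_pairs l xs i t)} \<le>
      (\<Sum>a<q. \<Sum>b<q. card {xs \<in> words q n. \<forall>j\<in>S0 \<union> S1. xs ! j = w a b j})"
    by (intro order.trans[OF card_mono card_UN_le] order.trans[OF _ sum_mono[OF card_UN_le]])
      (auto intro: finite_subset[OF _ finite_words])
  also have "\<dots> \<le> (\<Sum>a<q. \<Sum>b<q. q ^ (n - (2 * t + 2)))"
    using card_words_fixed_entries[OF S] unfolding card_S by (intro sum_mono) auto
  also have "\<dots> = q ^ 2 * q ^ (n - (2 * t + 2))"
    by (simp add: power2_eq_square)
  finally have "card {xs \<in> words q n. alternating (sampled_pairs l xs i t)} * q ^ (2 * t) \<le>
      q ^ 2 * q ^ (n - (2 * t + 2)) * q ^ (2 * t)"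
    by (rule mult_le_mono1)
  also have "\<dots> = q ^ (2 + (n - (2 * t + 2)) + 2 * t)"
    by (simp only: power_add)
  also have "2 + (n - (2 * t + 2)) + 2 * t = n"
    using card_S card_mono[OF _ S] by simp
  finally show ?thesis .
qed

lemma sum_geometric_tail_le:
  fixes r :: real
  assumes "0 \<le> r" "r \<le> 1 / 2"
  shows "(\<Sum>t\<in>{a..b}. r ^ t) \<le> 2 * r ^ a"
proof (cases "a \<le> b")
  case True
  have "(\<Sum>t\<in>{a..b}. r ^ t) = (r ^ a - r ^ Suc b) / (1 - r)"
    using True assms by (subst sum_gp) auto
  also have "\<dots> \<le> r ^ a / (1 - r)"
    using assms by (intro divide_right_mono) auto
  also have "\<dots> \<le> 2 * r ^ a"
    using assms mult_right_mono[of "2 * r" 1 "r ^ a"] by (simp add: divide_le_eq algebra_simps)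
  finally show ?thesis .
qed (use assms in simp)

lemma power_good_threshold_ge:
  assumes q: "q \<ge> 2" and n: "log q n > 0"
  shows "real n * log q n / real q ^ 2 \<le> real q ^ (2 * nat \<lceil>(log q n + log q (log q n)) / 2 - 1\<rceil>)"
proof -
  define \<tau> where "\<tau> = (log q n + log q (log q n)) / 2 - 1"
  have "n > 0" using n by (cases "n = 0") (auto simp: log_def)
  have "2 * \<tau> = log q n + log q (log q n) - 2" unfolding \<tau>_def by simp
  then have "q powr (2 * \<tau>) = q powr (log q n) * q powr (log q (log q n)) / q powr 2"
    by (simp only: powr_add powr_diff)
  then have "real n * log q n / real q ^ 2 = q powr (2 * \<tau>)"
    using q n \<open>n > 0\<close> by (simp add: powr_numeral)
  also have "\<dots> \<le> q powr real (2 * nat \<lceil>\<tau>\<rceil>)"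
    using q by (intro powr_mono) linarith+
  also have "\<dots> = real q ^ (2 * nat \<lceil>\<tau>\<rceil>)"
    using q powr_realpow[of "real q" "2 * nat \<lceil>\<tau>\<rceil>"] by simp
  finally show ?thesis unfolding \<tau>_def .
qed

lemma not_good_subset:
  assumes "l \<ge> 1"
  shows "{xs \<in> words q n. \<not> good q l xs} \<subseteq>
    (\<Union>t\<in>{nat \<lceil>(log q n + log q (log q n)) / 2 - 1\<rceil> .. n}. \<Union>i\<in>{1 .. int n - int t * int l - 1}.
       {xs \<in> words q n. alternating (sampled_pairs l xs i t)})"
proof safe
  fix xs assume xs: "xs \<in> words q n" "\<not> good q l xs"
  then obtain t i where t: "(log q n + log q (log q n)) / 2 - 1 \<le> real t"
    and i: "1 \<le> i" "i \<le> int n - int t * int l - 1" and "alternating (sampled_pairs l xs i t)"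
    unfolding good_iff_sampled_pairs words_def by auto
  moreover have "t \<le> n"
  proof -
    have "int t \<le> int t * int l" using assms mult_le_mono2[of 1 l t] by (simp flip: of_nat_mult)
    then show ?thesis using i by linarith
  qed
  moreover have "nat \<lceil>(log q n + log q (log q n)) / 2 - 1\<rceil> \<le> t" using t by linarith
  ultimately have "t \<in> {nat \<lceil>(log q n + log q (log q n)) / 2 - 1\<rceil> .. n}" "i \<in> {1 .. int n - int t * int l - 1}"
    and "alternating (sampled_pairs l xs i t)" by auto
  then show "xs \<in> (\<Union>t\<in>{nat \<lceil>(log q n + log q (log q n)) / 2 - 1\<rceil> .. n}.
      \<Union>i\<in>{1 .. int n - int t * int l - 1}. {xs \<in> words q n. alternating (sampled_pairs l xs i t)})"
    using xs by blast
qed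

lemma sum_card_alternating_sampled_pairs_le:
  assumes q: "q \<ge> 2" and l: "l \<ge> 2"
  shows "(\<Sum>i\<in>{1 .. int n - int t * int l - 1}. real (card {xs \<in> words q n. alternating (sampled_pairs l xs i t)}))
    \<le> real n * real q ^ n * (1 / real q ^ 2) ^ t"
proof -
  have "(\<Sum>i\<in>{1 .. int n - int t * int l - 1}. real (card {xs \<in> words q n. alternating (sampled_pairs l xs i t)}))
      \<le> (\<Sum>i\<in>{1 .. int n - int t * int l - 1}. real q ^ n / real q ^ (2 * t))"
  proof (intro sum_mono)
    fix i assume "i \<in> {1 .. int n - int t * int l - 1}"
    then have "card {xs \<in> words q n. alternating (sampled_pairs l xs i t)} * q ^ (2 * t) \<le> q ^ n"
      by (intro card_alternating_sampled_pairs[OF l]) auto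
    then have "real (card {xs \<in> words q n. alternating (sampled_pairs l xs i t)}) * real q ^ (2 * t) \<le> real q ^ n"
      by (metis of_nat_le_iff of_nat_mult of_nat_power)
    then show "real (card {xs \<in> words q n. alternating (sampled_pairs l xs i t)}) \<le> real q ^ n / real q ^ (2 * t)"
      using q by (simp add: le_divide_eq)
  qed
  also have "\<dots> \<le> real n * (real q ^ n / real q ^ (2 * t))"
  proof -
    have "card {1 .. int n - int t * int l - 1} \<le> n"
      by (simp add: nat_le_iff flip: of_nat_mult)
    then have "real (card {1 .. int n - int t * int l - 1}) * (real q ^ n / real q ^ (2 * t))
        \<le> real n * (real q ^ n / real q ^ (2 * t))"
      by (intro mult_right_mono) auto
    then show ?thesis by simp
  qed
  also have "\<dots> = real n * real q ^ n * (1 / real q ^ 2) ^ t"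
    by (simp add: power_mult power_divide)
  finally show ?thesis .
qed

text \<open>The geometric sum over t is dominated by its first term, at the threshold T0.\<close>

lemma card_not_good_le:
  assumes q: "q \<ge> 2" and l: "l \<ge> 2" and n: "log q n > 0"
  shows "real (card {xs \<in> words q n. \<not> good q l xs}) \<le> 2 * real q ^ 2 * real q ^ n / log q n"
proof -
  define T0 where "T0 = nat \<lceil>(log q n + log q (log q n)) / 2 - 1\<rceil>"
  define I where "I t = {1 .. int n - int t * int l - 1}" for t
  define A where "A t i = {xs \<in> words q n. alternating (sampled_pairs l xs i t)}" for t i
  have "n > 0" using n by (cases "n = 0") (auto simp: log_def)
  have "finite (\<Union>t\<in>{T0..n}. \<Union>i\<in>I t. A t i)"
    unfolding I_def A_def using finite_words by auto
  then have "card {xs \<in> words q n. \<not> good q l xs} \<le> card (\<Union>t\<in>{T0..n}. \<Union>i\<in>I t. A t i)"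
    using not_good_subset[of l q n] l unfolding T0_def I_def A_def by (intro card_mono) auto
  also have "\<dots> \<le> (\<Sum>t\<in>{T0..n}. \<Sum>i\<in>I t. card (A t i))"
    unfolding I_def by (intro order.trans[OF card_UN_le] sum_mono card_UN_le) auto
  finally have "real (card {xs \<in> words q n. \<not> good q l xs}) \<le> (\<Sum>t\<in>{T0..n}. \<Sum>i\<in>I t. real (card (A t i)))"
    by (simp flip: of_nat_sum)
  also have "\<dots> \<le> (\<Sum>t\<in>{T0..n}. real n * real q ^ n * (1 / real q ^ 2) ^ t)"
    unfolding I_def A_def by (intro sum_mono sum_card_alternating_sampled_pairs_le q l)
  also have "\<dots> \<le> real n * real q ^ n * (2 * (1 / real q ^ 2) ^ T0)"
  proof -
    have "1 / real q ^ 2 \<le> 1 / 2"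
      using q power_mono[of 2 "real q" 2] by (simp add: divide_le_eq)
    then show ?thesis
      unfolding sum_distrib_left[symmetric] by (intro mult_left_mono sum_geometric_tail_le) auto
  qed
  also have "\<dots> = 2 * real n * real q ^ n / real q ^ (2 * T0)"
    by (simp add: power_mult power_divide)
  also have "\<dots> \<le> 2 * real n * real q ^ n / (real n * log q n / real q ^ 2)"
    using power_good_threshold_ge[OF q n] n q \<open>n > 0\<close> unfolding T0_def
    by (intro divide_left_mono) auto
  also have "\<dots> = 2 * real q ^ 2 * real q ^ n / log q n"
    using \<open>n > 0\<close> by (simp add: field_simps)
  finally show ?thesis .
qed

lemma card_good_ge:
  assumes "q \<ge> 2" "l \<ge> 2" "log q n > 0"
  shows "real q ^ n * (1 - 2 * real q ^ 2 / log q n) \<le> real (card {xs \<in> words q n. good q l xs})"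
proof -
  have "card {xs \<in> words q n. good q l xs} + card {xs \<in> words q n. \<not> good q l xs} = q ^ n"
    unfolding card_words[symmetric] using finite_words
    by (subst card_Un_disjoint[symmetric]) (auto intro: arg_cong[where f = card])
  then show ?thesis
    using card_not_good_le[OF assms] by (simp add: algebra_simps flip: of_nat_add of_nat_power)
qed

lemma Pval_bounds:
  "log q n + log q (log q n) \<le> 2 * real_of_int (Pval q n)"
  "2 * real_of_int (Pval q n) < log q n + log q (log q n) + 2"
proof -
  have "w \<le> 2 * real_of_int \<lceil>w / 2\<rceil>" "2 * real_of_int \<lceil>w / 2\<rceil> < w + 2" for w :: real
    by linarith+
  then show "log q n + log q (log q n) \<le> 2 * real_of_int (Pval q n)"
    "2 * real_of_int (Pval q n) < log q n + log q (log q n) + 2"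
    unfolding Pval_def by blast+
qed

lemma Pval_pos:
  assumes "q \<ge> 2" "log q n \<ge> 1"
  shows "Pval q n > 0"
proof -
  have "log q (log q n) \<ge> 0" using assms by simp
  then have "real_of_int (Pval q n) > 0" using Pval_bounds(1)[of q n] assms(2) by linarith
  then show ?thesis by simp
qed

lemma exists_large_code_C:
  assumes "Pval q n > 0"
  obtains c where "0 \<le> c" "c \<le> Pval q n - 1"
    and "card {xs \<in> words q n. good q l xs} \<le> card (code_C q l n c) * nat (Pval q n)"
proof -
  let ?P = "Pval q n"
  have "(\<lambda>xs. int (Inv xs) mod ?P) \<in> {xs \<in> words q n. good q l xs} \<rightarrow> {0 .. ?P - 1}"
    using assms by (auto simp: pos_mod_bound pos_mod_sign)
  then have "\<exists>c\<in>{0 .. ?P - 1}. card {xs \<in> words q n. good q l xs} \<le>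
      card ((\<lambda>xs. int (Inv xs) mod ?P) -` {c} \<inter> {xs \<in> words q n. good q l xs}) * card {0 .. ?P - 1}"
    by (rule pigeonhole_card) (use assms finite_words in auto)
  then obtain c where c: "c \<in> {0 .. ?P - 1}" and
    "card {xs \<in> words q n. good q l xs} \<le>
       card ((\<lambda>xs. int (Inv xs) mod ?P) -` {c} \<inter> {xs \<in> words q n. good q l xs}) * card {0 .. ?P - 1}"
    by blast
  moreover have "(\<lambda>xs. int (Inv xs) mod ?P) -` {c} \<inter> {xs \<in> words q n. good q l xs} = code_C q l n c"
    using c unfolding code_C_def by auto
  ultimately show ?thesis using c by (intro that[of c]) auto
qed

lemma redundancy_le_if_card_ge:
  assumes "q \<ge> 2" "r > 0" "real q ^ n * r \<le> real (card C)"
  shows "redundancy q n C \<le> - log q r"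
proof -
  have "0 < real q ^ n * r" using assms by simp
  then have "0 < real (card C)" using assms(3) by linarith
  have "real n + log q r = log q (real q ^ n * r)"
    using assms by (simp add: log_mult log_pow_cancel)
  also have "\<dots> \<le> log q (real (card C))"
    using assms \<open>0 < real q ^ n * r\<close> \<open>0 < real (card C)\<close> by (subst log_le_cancel_iff) auto
  finally show ?thesis unfolding redundancy_def by simp
qed

lemma log_sequentially_at_top:
  assumes "b > 1"
  shows "filterlim (\<lambda>n::nat. log b (real n)) at_top sequentially"
proof -
  have "filterlim (\<lambda>n::nat. (1 / ln b) * ln (real n)) at_top sequentially"
    using assms by (intro filterlim_tendsto_pos_mult_at_top[OF tendsto_const]
        filterlim_compose[OF ln_at_top filterlim_real_sequentially]) auto
  then show ?thesis unfolding log_def by (simp add: field_simps)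
qed

lemma redundancy_code_C_eventually_le:
  assumes q: "q \<ge> 2" and l: "l \<ge> 2"
  shows "\<forall>\<^sub>F n in sequentially. \<exists>c. 0 \<le> c \<and> c \<le> Pval q n - 1 \<and>
     redundancy q n (code_C q l n c) \<le> log q (Pval q n) - log q (1 - 2 * real q ^ 2 / log q n)"
proof -
  have "\<forall>\<^sub>F n in sequentially. 2 * real q ^ 2 + 1 < log q n"
    using log_sequentially_at_top[of q] q by (simp add: filterlim_at_top_dense)
  then show ?thesis
  proof eventually_elim
    case (elim n)
    define \<epsilon> where "\<epsilon> = 1 - 2 * real q ^ 2 / log q n"
    have "0 \<le> 2 * real q ^ 2" by simp
    then have "1 \<le> log q n" "0 < log q n" using elim by linarith+
    then have "0 < \<epsilon>" using elim unfolding \<epsilon>_def by (simp add: divide_less_eq)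
    have P: "Pval q n > 0" using Pval_pos[OF q \<open>1 \<le> log q n\<close>] .
    obtain c where c: "0 \<le> c" "c \<le> Pval q n - 1"
      and large: "card {xs \<in> words q n. good q l xs} \<le> card (code_C q l n c) * nat (Pval q n)"
      using exists_large_code_C[OF P] by blast
    have "real q ^ n * \<epsilon> \<le> real (card {xs \<in> words q n. good q l xs})"
      using card_good_ge[OF q l \<open>0 < log q n\<close>] unfolding \<epsilon>_def .
    also have "\<dots> \<le> real (card (code_C q l n c)) * real (nat (Pval q n))"
      using large by (metis of_nat_le_iff of_nat_mult)
    finally have "real q ^ n * \<epsilon> \<le> real (card (code_C q l n c)) * real_of_int (Pval q n)"
      using P by simp
    then have "real q ^ n * (\<epsilon> / real_of_int (Pval q n)) \<le> real (card (code_C q l n c))"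
      using P by (simp add: pos_divide_le_eq)
    then have "redundancy q n (code_C q l n c) \<le> - log q (\<epsilon> / real_of_int (Pval q n))"
      using P \<open>0 < \<epsilon>\<close> by (intro redundancy_le_if_card_ge q) auto
    also have "\<dots> = log q (Pval q n) - log q \<epsilon>"
      using P \<open>0 < \<epsilon>\<close> by (simp add: log_divide)
    finally show ?case using c unfolding \<epsilon>_def by blast
  qed
qed

lemma log_one_minus_div_log_tendsto_0:
  assumes "b > 1"
  shows "(\<lambda>n::nat. log b (1 - c / log b (real n))) \<longlonglongrightarrow> 0"
proof -
  have "(\<lambda>n::nat. c / log b (real n)) \<longlonglongrightarrow> 0"
    by (intro tendsto_divide_0[OF tendsto_const] filterlim_at_top_imp_at_infinity
        log_sequentially_at_top assms)
  then have "(\<lambda>n::nat. log b (1 - c / log b (real n))) \<longlonglongrightarrow> log b (1 - 0)"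
    using assms by (intro tendsto_log tendsto_diff tendsto_const) auto
  then show ?thesis by simp
qed

section \<open>Asymptotics of P\<close>

lemma Pval_div_log_tendsto_1:
  assumes q: "q \<ge> 2"
  shows "(\<lambda>n. 2 * Pval q n / log q n) \<longlonglongrightarrow> 1"
proof -
  define u where "u n = log q (real n)" for n :: nat
  have u: "filterlim u at_top sequentially"
    unfolding u_def using q by (intro log_sequentially_at_top) simp
  have "(\<lambda>n. ln (u n) / u n) \<longlonglongrightarrow> 0"
    by (rule filterlim_compose[OF ln_x_over_x_tendsto_0 u])
  then have "(\<lambda>n. ln (u n) / u n / ln q) \<longlonglongrightarrow> 0 / ln q"
    using q by (intro tendsto_divide tendsto_const) auto
  moreover have "log q (u n) / u n = ln (u n) / u n / ln q" for n
    by (simp add: log_def)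
  ultimately have log_u: "(\<lambda>n. log q (u n) / u n) \<longlonglongrightarrow> 0"
    by (simp del: divide_divide_eq_left)
  have inverse_u: "(\<lambda>n. 2 / u n) \<longlonglongrightarrow> 0"
    by (rule tendsto_divide_0[OF tendsto_const filterlim_at_top_imp_at_infinity[OF u]])
  have "\<forall>\<^sub>F n in sequentially. 0 < u n"
    using u by (simp add: filterlim_at_top_dense)
  then have bounds: "\<forall>\<^sub>F n in sequentially.
      1 + log q (u n) / u n \<le> 2 * Pval q n / u n \<and> 2 * Pval q n / u n \<le> 1 + log q (u n) / u n + 2 / u n"
  proof eventually_elim
    case (elim n)
    then have "(u n + log q (u n)) / u n \<le> 2 * Pval q n / u n"
      "2 * Pval q n / u n \<le> (u n + log q (u n) + 2) / u n"
      using Pval_bounds[of q n] unfolding u_def by (auto intro: divide_right_mono)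
    with \<open>u n > 0\<close> show ?case
      by (simp add: add_divide_distrib)
  qed
  have "(\<lambda>n. 2 * Pval q n / u n) \<longlonglongrightarrow> 1"
  proof (rule tendsto_sandwich)
    show "(\<lambda>n. 1 + log q (u n) / u n) \<longlonglongrightarrow> 1"
      using tendsto_add[OF tendsto_const log_u, of 1] by simp
    show "(\<lambda>n. 1 + log q (u n) / u n + 2 / u n) \<longlonglongrightarrow> 1"
      using tendsto_add[OF tendsto_add[OF tendsto_const log_u] inverse_u, of 1] by simp
  qed (use bounds in \<open>auto elim: eventually_mono\<close>)
  then show ?thesis unfolding u_def .
qed

lemma log_Pval_asymptotics:
  assumes q: "q \<ge> 2"
  shows "(\<lambda>n. log q (Pval q n) - (log q (log q n) - log q 2)) \<longlonglongrightarrow> 0"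
proof -
  have "(\<lambda>n. log q (2 * Pval q n / log q n)) \<longlonglongrightarrow> log q 1"
    using Pval_div_log_tendsto_1[OF q] q by (intro tendsto_log) auto
  moreover have "\<forall>\<^sub>F n in sequentially. 1 \<le> log q (real n)"
    using log_sequentially_at_top[of q] q by (simp add: filterlim_at_top)
  then have "\<forall>\<^sub>F n in sequentially.
      log q (2 * Pval q n / log q n) = log q (Pval q n) - (log q (log q n) - log q 2)"
  proof eventually_elim
    case (elim n)
    then have "Pval q n > 0" using Pval_pos[OF q] by blast
    then show ?case
      using elim q by (simp add: log_mult log_divide)
  qed
  ultimately show ?thesis by (simp add: tendsto_cong)
qed

theorem theorem4:
  fixes q l :: nat
  assumes "q \<ge> 2" and "l \<ge> 3"
  shows "(\<forall>n a. n > 0 \<longrightarrow> 0 \<le> a \<longrightarrow> a \<le> Pval q n - 1 \<longrightarrow>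
            is_read_code l q n 3 (code_C q l n a))
       \<and> (\<exists>f :: nat \<Rightarrow> real. f \<longlonglongrightarrow> 0 \<and>
            (\<forall>\<^sub>F n in sequentially. \<exists>a. 0 \<le> a \<and> a \<le> Pval q n - 1 \<and>
               redundancy q n (code_C q l n a) \<le> log q (Pval q n) + f n))
       \<and> (\<lambda>n. log q (Pval q n) - (log q (log q n) - log q 2)) \<longlonglongrightarrow> 0"
proof -
  define f where "f n = - log q (1 - 2 * real q ^ 2 / log q n)" for n :: nat
  have "f \<longlonglongrightarrow> 0"
    unfolding f_def using tendsto_minus[OF log_one_minus_div_log_tendsto_0] assms(1) by fastforce
  moreover have "\<forall>\<^sub>F n in sequentially. \<exists>a. 0 \<le> a \<and> a \<le> Pval q n - 1 \<and>
      redundancy q n (code_C q l n a) \<le> log q (Pval q n) + f n"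
    using redundancy_code_C_eventually_le[of q l] assms unfolding f_def by simp
  ultimately show ?thesis
    using is_read_code_code_C[OF assms(2)] log_Pval_asymptotics[OF assms(1)] by blast
qed

end
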